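(* Let $F$ be a connected graph and $Q$ a connected chordal graph. Let $\mu:V(F)\to V(Q)$ be a function such that for every induced path $p_1\cdots p_m$ in $F$ of length at most two, the vertices $\mu(p_1),\ldots,\mu(p_m)$ are pairwise distinct and $\mu(p_1)\cdots\mu(p_m)$ is an induced path of $Q$. Then $\mu$ is injective and preserves the adjacency relation, i.e. for all $v,w\in V(F)$, $vw\in E(F)$ if and only if $\mu(v)\mu(w)\in E(Q)$.
   Context: A graph is chordal if it has no induced cycle of length at least $4$. The length of a path is its number of edges. *)

theory Defs
  imports Main
begin

definition graph :: "'a set \<Rightarrow> ('a \<Rightarrow> 'a \<Rightarrow> bool) \<Rightarrow> bool" where
  "graph V E \<longleftrightarrow> finite V \<and> (\<forall>x y. E x y \<longrightarrow> x \<in> V \<and> y \<in> V)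
     \<and> (\<forall>x y. E x y \<longrightarrow> E y x) \<and> (\<forall>x. \<not> E x x)"

definition connected_graph :: "'a set \<Rightarrow> ('a \<Rightarrow> 'a \<Rightarrow> bool) \<Rightarrow> bool" where
  "connected_graph V E \<longleftrightarrow> graph V E \<and> V \<noteq> {} \<and> (\<forall>u\<in>V. \<forall>v\<in>V. E\<^sup>*\<^sup>* u v)"

text \<open>Induced path p_1 ... p_m (a list of m \<ge> 1 distinct vertices; its length is m - 1):
  two vertices are adjacent iff they are consecutive.\<close>
definition induced_path :: "'a set \<Rightarrow> ('a \<Rightarrow> 'a \<Rightarrow> bool) \<Rightarrow> 'a list \<Rightarrow> bool" where
  "induced_path V E ps \<longleftrightarrow> ps \<noteq> [] \<and> distinct ps \<and> set ps \<subseteq> V \<and>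
     (\<forall>i j. i < j \<and> j < length ps \<longrightarrow> (E (ps ! i) (ps ! j) \<longleftrightarrow> j = i + 1))"

definition induced_cycle :: "'a set \<Rightarrow> ('a \<Rightarrow> 'a \<Rightarrow> bool) \<Rightarrow> 'a list \<Rightarrow> bool" where
  "induced_cycle V E cs \<longleftrightarrow> length cs \<ge> 3 \<and> distinct cs \<and> set cs \<subseteq> V \<and>
     (\<forall>i j. i < j \<and> j < length cs \<longrightarrow>
        (E (cs ! i) (cs ! j) \<longleftrightarrow> j = i + 1 \<or> (i = 0 \<and> j = length cs - 1)))"

definition chordal :: "'a set \<Rightarrow> ('a \<Rightarrow> 'a \<Rightarrow> bool) \<Rightarrow> bool" where
  "chordal V E \<longleftrightarrow> graph V E \<and> (\<nexists>cs. induced_cycle V E cs \<and> length cs \<ge> 4)"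

end

theory Submission
  imports Defs
begin

text \<open>For m \<ge> 4, the images of
  p_1 \<dots> p_{m-1} and p_2 \<dots> p_m are induced paths of Q; hence \<mu>(p_1) \<dots> \<mu>(p_m) is either an induced
  path or an induced cycle of length m, and chordality rules out the cycle. Connectivity of F gives an
  induced path between any two distinct vertices v, w (a shortest walk); its image is an induced path, so
  \<mu> v \<noteq> \<mu> w, and \<mu> v, \<mu> w are adjacent exactly when the path has a single edge, i.e. when v, w are.\<close>

lemma induced_path_nth_neq:
  "induced_path V E ps \<Longrightarrow> i < j \<Longrightarrow> j < length ps \<Longrightarrow> ps ! i \<noteq> ps ! j"
  unfolding induced_path_def by (simp add: nth_eq_iff_index_eq)

lemma induced_path_adj_iff:
  "induced_path V E ps \<Longrightarrow> i < j \<Longrightarrow> j < length ps \<Longrightarrow> E (ps ! i) (ps ! j) \<longleftrightarrow> j = i + 1"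
  unfolding induced_path_def by blast

lemma
  assumes "induced_path V E ps" "length ps \<ge> 2"
  shows induced_path_hd_neq_last: "hd ps \<noteq> last ps"
    and induced_path_hd_last_adj_iff: "E (hd ps) (last ps) \<longleftrightarrow> length ps = 2"
proof -
  have "ps \<noteq> []"
    using assms(2) by auto
  then have "hd ps = ps ! 0" "last ps = ps ! (length ps - 1)" "0 < length ps - 1"
    using assms(2) by (simp_all add: hd_conv_nth last_conv_nth)
  then show "hd ps \<noteq> last ps" "E (hd ps) (last ps) \<longleftrightarrow> length ps = 2"
    using induced_path_nth_neq[OF assms(1)] induced_path_adj_iff[OF assms(1)] by auto
qed

lemma induced_path_tl:
  assumes "induced_path V E ps" "length ps \<ge> 2"
  shows "induced_path V E (tl ps)"
proof -
  have "E (tl ps ! i) (tl ps ! j) \<longleftrightarrow> j = i + 1" if "i < j" "j < length (tl ps)" for i j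
    using induced_path_adj_iff[OF assms(1), of "Suc i" "Suc j"] that by (simp add: nth_tl)
  then show ?thesis
    using assms unfolding induced_path_def by (cases ps) auto
qed

lemma induced_path_butlast:
  assumes "induced_path V E ps" "length ps \<ge> 2"
  shows "induced_path V E (butlast ps)"
proof -
  have "E (butlast ps ! i) (butlast ps ! j) \<longleftrightarrow> j = i + 1" if "i < j" "j < length (butlast ps)" for i j
    using induced_path_adj_iff[OF assms(1), of i j] that by (simp add: nth_butlast)
  moreover have "butlast ps \<noteq> []"
    using assms(2) by (cases ps) auto
  ultimately show ?thesis
    using assms(1) unfolding induced_path_def by (auto simp: distinct_butlast dest: in_set_butlastD)
qed

lemma induced_path_or_induced_cycle:
  assumes g: "graph V E" and len: "length xs \<ge> 4"
    and init: "induced_path V E (butlast xs)" and tail: "induced_path V E (tl xs)"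
  shows "induced_path V E xs \<or> induced_cycle V E xs"
proof -
  define n where "n = length xs"
  have init': "xs ! i \<noteq> xs ! j \<and> (E (xs ! i) (xs ! j) \<longleftrightarrow> j = i + 1)" if "i < j" "j < n - 1" for i j
    using induced_path_nth_neq[OF init, of i j] induced_path_adj_iff[OF init, of i j] that
    by (simp add: n_def nth_butlast)
  have tail': "xs ! i \<noteq> xs ! j \<and> (E (xs ! i) (xs ! j) \<longleftrightarrow> j = i + 1)" if "0 < i" "i < j" "j < n" for i j
    using induced_path_nth_neq[OF tail, of "i - 1" "j - 1"] induced_path_adj_iff[OF tail, of "i - 1" "j - 1"] that
    by (auto simp: n_def nth_tl)
  have ends_neq: "xs ! 0 \<noteq> xs ! (n - 1)"
  proof
    assume "xs ! 0 = xs ! (n - 1)"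
    moreover have "E (xs ! 0) (xs ! 1)"
      using init'[of 0 1] len by (simp add: n_def)
    ultimately have "E (xs ! 1) (xs ! (n - 1))"
      using g unfolding graph_def by metis
    moreover have "1 < n - 1" "n - 1 < n"
      using len by (simp_all add: n_def)
    ultimately have "n - 1 = 2"
      using tail'[of 1 "n - 1"] by simp
    then show False
      using len by (simp add: n_def)
  qed
  have pair: "xs ! i \<noteq> xs ! j \<and> (E (xs ! i) (xs ! j) \<longleftrightarrow> j = i + 1 \<or> (i = 0 \<and> j = n - 1 \<and> E (xs ! 0) (xs ! (n - 1))))"
    if "i < j" "j < n" for i j
  proof (cases "j < n - 1")
    case True
    then show ?thesis using init'[of i j] that by auto
  next
    case False
    then have j: "j = n - 1" using that by simp
    show ?thesis
    proof (cases "i = 0")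
      case True
      moreover have "j \<noteq> 1" using j len by (simp add: n_def)
      ultimately show ?thesis using j ends_neq by simp
    next
      case False
      then show ?thesis using tail'[of i j] j that by simp
    qed
  qed
  have dist: "distinct xs"
    unfolding distinct_conv_nth using pair by (metis n_def nat_neq_iff)
  have set: "set xs \<subseteq> V"
  proof -
    have "set (butlast xs) \<subseteq> V" "set (tl xs) \<subseteq> V"
      using init tail unfolding induced_path_def by simp_all
    moreover have "set xs \<subseteq> set (butlast xs) \<union> set (tl xs)"
      using len by (cases xs rule: rev_cases) (auto simp: tl_append split: list.splits)
    ultimately show ?thesis
      by blast
  qed
  show ?thesis
  proof (cases "E (xs ! 0) (xs ! (n - 1))")
    case True
    then have "\<forall>i j. i < j \<and> j < n \<longrightarrow> (E (xs ! i) (xs ! j) \<longleftrightarrow> j = i + 1 \<or> (i = 0 \<and> j = n - 1))"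
      using pair by simp
    then have "induced_cycle V E xs"
      unfolding induced_cycle_def n_def[symmetric] using dist set len n_def by simp
    then show ?thesis ..
  next
    case False
    then have "\<forall>i j. i < j \<and> j < n \<longrightarrow> (E (xs ! i) (xs ! j) \<longleftrightarrow> j = i + 1)"
      using pair by simp
    then have "induced_path V E xs"
      unfolding induced_path_def n_def[symmetric] using dist set len by auto
    then show ?thesis ..
  qed
qed

lemma induced_path_map_of_chordal:
  assumes Q: "chordal VQ EQ"
    and short: "\<And>ps. induced_path VF EF ps \<Longrightarrow> length ps \<le> 3 \<Longrightarrow> induced_path VQ EQ (map \<mu> ps)"
  shows "induced_path VF EF ps \<Longrightarrow> induced_path VQ EQ (map \<mu> ps)"
proof (induction "length ps" arbitrary: ps rule: less_induct)
  case less
  show ?case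
  proof (cases "length ps \<le> 3")
    case True
    then show ?thesis using short less.prems by blast
  next
    case False
    have "induced_path VQ EQ (butlast (map \<mu> ps))"
      using less.hyps[of "butlast ps"] induced_path_butlast[OF less.prems] False
      by (simp add: map_butlast)
    moreover have "induced_path VQ EQ (tl (map \<mu> ps))"
      using less.hyps[of "tl ps"] induced_path_tl[OF less.prems] False
      by (simp add: map_tl)
    moreover have "graph VQ EQ"
      using Q unfolding chordal_def by blast
    ultimately show ?thesis
      using induced_path_or_induced_cycle[of VQ EQ "map \<mu> ps"] False Q
      unfolding chordal_def by auto
  qed
qed

lemma successively_skip_loop:
  "successively E (xs @ y # ys @ y # zs) \<Longrightarrow> successively E (xs @ y # zs)"
  by (auto simp: successively_append_iff successively_Cons)

lemma successively_skip_chord: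
  assumes "successively E ps" "i < j" "j < length ps" "E (ps ! i) (ps ! j)"
  shows "successively E (take (Suc i) ps @ drop j ps)"
proof -
  have "successively E (take (Suc i) ps)" "successively E (drop j ps)"
    using assms(1) successively_append_iff[of E "take (Suc i) ps" "drop (Suc i) ps"]
      successively_append_iff[of E "take j ps" "drop j ps"] by simp_all
  moreover have "last (take (Suc i) ps) = ps ! i"
    using assms(2,3) by (subst last_conv_nth) (auto simp: min_def)
  moreover have "hd (drop j ps) = ps ! j"
    using assms(3) by (simp add: hd_drop_conv_nth)
  ultimately show ?thesis
    using assms(2,3,4) by (auto simp: successively_append_iff)
qed

lemma induced_path_of_walk:
  assumes "successively E ps" "ps \<noteq> []" "set ps \<subseteq> V"
  shows "\<exists>qs. induced_path V E qs \<and> hd qs = hd ps \<and> last qs = last ps"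
  using assms
proof (induction "length ps" arbitrary: ps rule: less_induct)
  case less
  have shorter: "\<exists>qs. induced_path V E qs \<and> hd qs = hd ps \<and> last qs = last ps"
    if "successively E ps'" "set ps' \<subseteq> V" "length ps' < length ps" "ps' \<noteq> []"
       "hd ps' = hd ps" "last ps' = last ps" for ps'
    using less.hyps that by metis
  show ?case
  proof (cases "distinct ps")
    case False
    then obtain xs y ys zs where ps: "ps = xs @ y # ys @ y # zs"
      using not_distinct_decomp by fastforce
    show ?thesis
    proof (rule shorter[of "xs @ y # zs"])
      show "successively E (xs @ y # zs)"
        using less.prems(1) unfolding ps by (rule successively_skip_loop)
      show "hd (xs @ y # zs) = hd ps" "last (xs @ y # zs) = last ps"
        unfolding ps by (cases xs; simp) (cases zs; simp)
    qed (use less.prems(3) ps in auto)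
  next
    case True
    show ?thesis
    proof (cases "induced_path V E ps")
      case False
      then obtain i j where ij: "i < j" "j < length ps" "\<not> (E (ps ! i) (ps ! j) \<longleftrightarrow> j = i + 1)"
        using True less.prems unfolding induced_path_def by blast
      with successively_nth[OF less.prems(1), of i] have chord: "E (ps ! i) (ps ! j)" "i + 1 < j"
        by auto
      show ?thesis
      proof (rule shorter[of "take (Suc i) ps @ drop j ps"])
        show "successively E (take (Suc i) ps @ drop j ps)"
          using successively_skip_chord[OF less.prems(1) ij(1,2) chord(1)] .
        show "set (take (Suc i) ps @ drop j ps) \<subseteq> V"
          using less.prems(3) set_take_subset[of "Suc i" ps] set_drop_subset[of j ps] by auto
      qed (use ij chord less.prems(2) in auto)
    qed blast
  qed
qed

lemma induced_path_of_rtranclp: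
  assumes "graph V E" "E\<^sup>*\<^sup>* v w" "v \<in> V"
  shows "\<exists>ps. induced_path V E ps \<and> hd ps = v \<and> last ps = w"
proof -
  have "\<exists>ps. successively E ps \<and> ps \<noteq> [] \<and> set ps \<subseteq> V \<and> hd ps = v \<and> last ps = w"
    using assms(2,3)
  proof (induction rule: converse_rtranclp_induct)
    case base
    then show ?case by (intro exI[of _ "[w]"]) auto
  next
    case (step u x)
    then obtain ps where "successively E ps" "ps \<noteq> []" "set ps \<subseteq> V" "hd ps = x" "last ps = w"
      using assms(1) unfolding graph_def by blast
    then show ?case
      using step.hyps(1) step.prems by (intro exI[of _ "u # ps"]) (auto simp: successively_Cons)
  qed
  then show ?thesis
    using induced_path_of_walk by metis
qed

lemma induced_path_preserving_map_is_embedding: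
  assumes F: "connected_graph VF EF" and Q: "graph VQ EQ"
    and image: "\<And>ps. induced_path VF EF ps \<Longrightarrow> induced_path VQ EQ (map \<mu> ps)"
  shows "inj_on \<mu> VF \<and> (\<forall>v\<in>VF. \<forall>w\<in>VF. EF v w \<longleftrightarrow> EQ (\<mu> v) (\<mu> w))"
proof -
  have gF: "graph VF EF"
    using F unfolding connected_graph_def by blast
  have distinct_ends: "\<mu> v \<noteq> \<mu> w \<and> (EF v w \<longleftrightarrow> EQ (\<mu> v) (\<mu> w))"
    if "v \<in> VF" "w \<in> VF" "v \<noteq> w" for v w
  proof -
    have "EF\<^sup>*\<^sup>* v w"
      using F that unfolding connected_graph_def by blast
    then obtain ps where ps: "induced_path VF EF ps" "hd ps = v" "last ps = w"
      using induced_path_of_rtranclp[OF gF _ \<open>v \<in> VF\<close>] by blast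
    have "ps \<noteq> []"
      using ps(1) by (simp add: induced_path_def)
    then have len: "length ps \<ge> 2"
      using ps(2,3) \<open>v \<noteq> w\<close> by (cases ps; cases "tl ps") auto
    have "length (map \<mu> ps) \<ge> 2" "hd (map \<mu> ps) = \<mu> v" "last (map \<mu> ps) = \<mu> w"
      using len ps(2,3) \<open>ps \<noteq> []\<close> by (simp_all add: hd_map last_map)
    then show ?thesis
      using induced_path_hd_neq_last[OF image[OF ps(1)]] induced_path_hd_last_adj_iff[OF image[OF ps(1)]]
        induced_path_hd_last_adj_iff[OF ps(1) len] ps(2,3) by simp
  qed
  moreover have "\<not> EF v v" "\<not> EQ (\<mu> v) (\<mu> v)" for v
    using gF Q unfolding graph_def by blast+
  ultimately show ?thesis
    unfolding inj_on_def by metis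
qed

theorem lemma3p2:
  fixes VF :: "'a set" and EF :: "'a \<Rightarrow> 'a \<Rightarrow> bool"
    and VQ :: "'b set" and EQ :: "'b \<Rightarrow> 'b \<Rightarrow> bool"
    and \<mu> :: "'a \<Rightarrow> 'b"
  assumes "connected_graph VF EF"
    and "connected_graph VQ EQ" and "chordal VQ EQ"
    and "\<mu> ` VF \<subseteq> VQ"
    and "\<And>ps. induced_path VF EF ps \<Longrightarrow> length ps \<le> 3 \<Longrightarrow>
           distinct (map \<mu> ps) \<and> induced_path VQ EQ (map \<mu> ps)"
  shows "inj_on \<mu> VF \<and> (\<forall>v\<in>VF. \<forall>w\<in>VF. EF v w \<longleftrightarrow> EQ (\<mu> v) (\<mu> w))"
proof (rule induced_path_preserving_map_is_embedding)
  show "graph VQ EQ"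
    using assms(3) unfolding chordal_def by blast
  show "induced_path VQ EQ (map \<mu> ps)" if "induced_path VF EF ps" for ps
    using induced_path_map_of_chordal[OF assms(3) _ that] assms(5) by blast
qed (use assms(1) in blast)

end
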